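(* Let $\{X,F\}$ be a compatible pair of skew invertible operators $X,F\in\mathrm{End}(V\otimes V)$, with $F$ invertible. Then $$C_{X,1}\Psi_{F,12}=F_{21}^{-1}C_{X,2},\quad \Psi_{F,12}C_{X,1}=C_{X,2}F_{21}^{-1},\quad \Psi_{F,12}D_{X,2}=D_{X,1}F_{21}^{-1},\quad D_{X,2}\Psi_{F,12}=F_{21}^{-1}D_{X,1}.$$
   Context: $V$ is a complex vector space of dimension $N$ with a fixed basis. For $X\in\mathrm{End}(V\otimes V)$ and $m<r$, $X_{mr}$ denotes the operator on $V^{\otimes n}$ acting as $X$ on tensor factors $m,r$ and as the identity elsewhere, $X_{rm}:=P_{mr}X_{mr}P_{mr}$, $X_m:=X_{m,m+1}$; for $Y\in\mathrm{End}(V)$, $Y_m$ acts as $Y$ on factor $m$. $P$ is the flip $u\otimes v\mapsto v\otimes u$; $\mathrm{Tr}_{(i)}$ is partial trace over factor $i$. $X$ is skew invertible if there is $\Psi_X\in\mathrm{End}(V\otimes V)$ with $\mathrm{Tr}_{(2)}X_{12}\Psi_{X,23}=\mathrm{Tr}_{(2)}\Psi_{X,12}X_{23}=P_{13}$; then $C_X:=\mathrm{Tr}_{(1)}\Psi_{X,12}$, $D_X:=\mathrm{Tr}_{(2)}\Psi_{X,12}$. A pair $\{X,F\}$ is compatible if $X_1F_2F_1=F_2F_1X_2$ and $X_2F_1F_2=F_1F_2X_1$. *)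

theory Defs
  imports "HOL-Analysis.Analysis"
begin

text \<open>V = complex vector space with basis indexed by the finite type 'n (N = CARD('n)).
  Operators are complex matrices w.r.t. the product basis:
  End(V) = op1, End(V\<otimes>V) = op2, End(V\<otimes>V\<otimes>V) = op3.
  Entry A $ p $ q is the coefficient of basis vector p in A applied to basis vector q.\<close>

type_synonym 'n op1 = "complex ^ 'n ^ 'n"
type_synonym 'n op2 = "complex ^ ('n \<times> 'n) ^ ('n \<times> 'n)"
type_synonym 'n op3 = "complex ^ ('n \<times> 'n \<times> 'n) ^ ('n \<times> 'n \<times> 'n)"

definition kdelta :: "'a \<Rightarrow> 'a \<Rightarrow> complex" where
  "kdelta a b = (if a = b then 1 else 0)"

definition flip :: "('n::finite) op2" where
  "flip = (\<chi> p q. kdelta (fst p) (snd q) * kdelta (snd p) (fst q))"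

definition on1 :: "('n::finite) op1 \<Rightarrow> 'n op2" where
  "on1 Y = (\<chi> p q. Y $ fst p $ fst q * kdelta (snd p) (snd q))"
definition on2 :: "('n::finite) op1 \<Rightarrow> 'n op2" where
  "on2 Y = (\<chi> p q. kdelta (fst p) (fst q) * Y $ snd p $ snd q)"

definition on12 :: "('n::finite) op2 \<Rightarrow> 'n op3" where
  "on12 X = (\<chi> p q. X $ (fst p, fst (snd p)) $ (fst q, fst (snd q)) * kdelta (snd (snd p)) (snd (snd q)))"
definition on23 :: "('n::finite) op2 \<Rightarrow> 'n op3" where
  "on23 X = (\<chi> p q. kdelta (fst p) (fst q) * X $ snd p $ snd q)"

definition op21 :: "('n::finite) op2 \<Rightarrow> 'n op2" where
  "op21 X = flip ** X ** flip"

definition ptr_mid :: "('n::finite) op3 \<Rightarrow> 'n op2" where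
  "ptr_mid A = (\<chi> p q. \<Sum>j\<in>UNIV. A $ (fst p, j, snd p) $ (fst q, j, snd q))"

definition ptr1 :: "('n::finite) op2 \<Rightarrow> 'n op1" where
  "ptr1 A = (\<chi> i k. \<Sum>j\<in>UNIV. A $ (j, i) $ (j, k))"
definition ptr2 :: "('n::finite) op2 \<Rightarrow> 'n op1" where
  "ptr2 A = (\<chi> i k. \<Sum>j\<in>UNIV. A $ (i, j) $ (k, j))"

definition is_skew_inverse :: "('n::finite) op2 \<Rightarrow> 'n op2 \<Rightarrow> bool" where
  "is_skew_inverse X Psi \<longleftrightarrow>
     ptr_mid (on12 X ** on23 Psi) = flip \<and> ptr_mid (on12 Psi ** on23 X) = flip"

definition skew_invertible :: "('n::finite) op2 \<Rightarrow> bool" where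
  "skew_invertible X \<longleftrightarrow> (\<exists>Psi. is_skew_inverse X Psi)"

definition skew_inv :: "('n::finite) op2 \<Rightarrow> 'n op2" ("\<Psi>") where
  "skew_inv X = (THE Psi. is_skew_inverse X Psi)"

definition C_op :: "('n::finite) op2 \<Rightarrow> 'n op1" where
  "C_op X = ptr1 (skew_inv X)"
definition D_op :: "('n::finite) op2 \<Rightarrow> 'n op1" where
  "D_op X = ptr2 (skew_inv X)"

definition compatible :: "('n::finite) op2 \<Rightarrow> 'n op2 \<Rightarrow> bool" where
  "compatible X F \<longleftrightarrow>
     on12 X ** on23 F ** on12 F = on23 F ** on12 F ** on23 X \<and>
     on23 X ** on12 F ** on23 F = on12 F ** on23 F ** on12 X"

end

theory Submission
  imports Defs
begin

text \<open>Compatibility gives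
  F_12 X_23 F_12^-1 = F_23^-1 X_12 F_23; contracting it with Psi_X and using Tr_(1) C_X,1 X_12 = 1
  yields Tr_(1) C_X,1 F_12 F_13^-1 = P_23 C_X,2, and contracting this with Psi_F gives
  C_X,1 Psi_F,12 = F_21^-1 C_X,2. All hypotheses are invariant under transposition and under
  X \<mapsto> X_21; for compatibility the latter holds because conjugation by the reversal of the three
  tensor factors exchanges the two defining equations. Transposition reverses products and turns
  the first relation into the second; X \<mapsto> X_21 exchanges C_X with D_X as well as the factors 1 and 2,
  and turns the first two relations into the last two.\<close>

abbreviation entry :: "('n::finite) op2 \<Rightarrow> 'n \<Rightarrow> 'n \<Rightarrow> 'n \<Rightarrow> 'n \<Rightarrow> complex" where
  "entry A a b c d \<equiv> A $ (a,b) $ (c,d)"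

lemma kdelta_mult: "kdelta a b * h = (if a = b then h else 0)"
  by (simp add: kdelta_def)

lemma mult_kdelta: "h * kdelta a b = (if a = b then h else 0)"
  by (simp add: kdelta_def)

lemma mult_if_zero: "x * (if P then y else 0) = (if P then x * y else (0::'a::mult_zero))"
  by simp

lemma if_zero_mult: "(if P then y else 0) * x = (if P then y * x else (0::'a::mult_zero))"
  by simp

lemma sum_if_zero: "(\<Sum>x\<in>A. if P then f x else 0) = (if P then \<Sum>x\<in>A. f x else 0)"
  by simp

lemmas kdelta_simps = kdelta_mult mult_kdelta mult_if_zero if_zero_mult sum_if_zero

lemma kdelta_commute: "kdelta a b = kdelta b a"
  by (simp add: kdelta_def)

lemma sum_UNIV_prod: "(\<Sum>p\<in>UNIV. h p) = (\<Sum>a\<in>UNIV. \<Sum>b\<in>UNIV. h (a, b))"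
  by (simp add: sum.cartesian_product UNIV_Times_UNIV[symmetric] del: UNIV_Times_UNIV)

lemma mat_one_entry: "(mat 1 :: ('n::finite) op2) $ (a,b) $ (c,d) = kdelta a c * kdelta b d"
  by (simp add: mat_def kdelta_def)

subsection \<open>Matrix inverses\<close>

lemma matrix_inv_right:
  fixes A :: "'a::semiring_1 ^ 'n ^ 'm"
  assumes "invertible A"
  shows "A ** matrix_inv A = mat 1"
  by (metis (mono_tags, lifting) assms invertible_def matrix_inv_def someI_ex)

lemma matrix_inv_left:
  fixes A :: "'a::semiring_1 ^ 'n ^ 'm"
  assumes "invertible A"
  shows "matrix_inv A ** A = mat 1"
  by (metis (mono_tags, lifting) assms invertible_def matrix_inv_def someI_ex)

lemma matrix_inv_eqI:
  fixes A B :: "'a::field ^ 'n ^ 'n"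
  assumes "A ** B = mat 1"
  shows "matrix_inv A = B"
proof -
  have "invertible A"
    using assms invertible_right_inverse by blast
  then have "matrix_inv A = matrix_inv A ** (A ** B)"
    by (simp add: assms)
  also have "\<dots> = B"
    by (simp add: matrix_mul_assoc matrix_inv_left \<open>invertible A\<close>)
  finally show ?thesis .
qed

lemma invertible_transpose:
  fixes A :: "'a::field ^ 'n ^ 'n"
  assumes "invertible A"
  shows "invertible (transpose A)"
    and "matrix_inv (transpose A) = transpose (matrix_inv A)"
proof -
  have "transpose A ** transpose (matrix_inv A) = mat 1"
    by (simp add: matrix_transpose_mul[symmetric] matrix_inv_left assms)
  then show "invertible (transpose A)" "matrix_inv (transpose A) = transpose (matrix_inv A)"
    by (auto simp: invertible_right_inverse intro: matrix_inv_eqI)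
qed

subsection \<open>Operators on tensor powers\<close>

lemma on12_mult: "on12 A ** on12 B = on12 (A ** B)"
  by (simp add: vec_eq_iff on12_def matrix_matrix_mult_def sum_UNIV_prod kdelta_simps sum_distrib_right)

lemma on23_mult: "on23 A ** on23 B = on23 (A ** B)"
  by (simp add: vec_eq_iff on23_def matrix_matrix_mult_def sum_UNIV_prod kdelta_simps sum_distrib_left)

lemma on12_mat_one [simp]: "on12 (mat 1) = mat 1"
  by (simp add: vec_eq_iff on12_def mat_def kdelta_def)

lemma on23_mat_one [simp]: "on23 (mat 1) = mat 1"
  by (simp add: vec_eq_iff on23_def mat_def kdelta_def)

lemma ptr_mid_on12_on23:
  "ptr_mid (on12 A ** on23 B) $ (a,c) $ (g,i) = (\<Sum>(j,e)\<in>UNIV. entry A a j g e * entry B e c j i)"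
  by (simp add: ptr_mid_def matrix_matrix_mult_def on12_def on23_def sum_UNIV_prod kdelta_simps)

lemma on12_on23_on12_entry:
  "(on12 A ** on23 B ** on12 C) $ (x,b,j) $ (a,e,e')
     = (\<Sum>(s1,s2,r)\<in>UNIV. entry A x b s1 r * entry B r j s2 e' * entry C s1 s2 a e)"
  by (simp add: matrix_matrix_mult_def on12_def on23_def sum_UNIV_prod kdelta_simps sum_distrib_left sum_distrib_right)

lemma on23_on12_on23_entry:
  "(on23 A ** on12 B ** on23 C) $ (x,b,j) $ (a,e,e')
     = (\<Sum>(s1,s2,r)\<in>UNIV. entry A b j r s2 * entry B x r a s1 * entry C s1 s2 e e')"
  by (simp add: matrix_matrix_mult_def on12_def on23_def sum_UNIV_prod kdelta_simps sum_distrib_left sum_distrib_right)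

lemma op21_entry: "op21 A $ (a,b) $ (c,d) = A $ (b,a) $ (d,c)"
  by (simp add: op21_def flip_def matrix_matrix_mult_def sum_UNIV_prod kdelta_simps)

lemma op21_op21 [simp]: "op21 (op21 A) = A"
  by (simp add: vec_eq_iff op21_entry)

lemma op21_mult: "op21 (A ** B) = op21 A ** op21 B"
  by (simp add: vec_eq_iff op21_entry matrix_matrix_mult_def sum_UNIV_prod) (intro allI sum.swap)

lemma op21_mat_one [simp]: "op21 (mat 1) = mat 1"
  by (simp add: vec_eq_iff op21_entry mat_def)

lemma invertible_op21:
  assumes "invertible F"
  shows "invertible (op21 F)"
    and "matrix_inv (op21 F) = op21 (matrix_inv F)"
proof -
  have "op21 F ** op21 (matrix_inv F) = mat 1"
    by (simp add: op21_mult[symmetric] matrix_inv_right assms)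
  then show "invertible (op21 F)" "matrix_inv (op21 F) = op21 (matrix_inv F)"
    by (auto simp: invertible_right_inverse intro: matrix_inv_eqI)
qed

lemma op21_on1: "op21 (on1 Y) = on2 Y"
  by (simp add: vec_eq_iff op21_entry on1_def on2_def)

lemma op21_on2: "op21 (on2 Y) = on1 Y"
  by (simp add: vec_eq_iff op21_entry on1_def on2_def)

lemma ptr1_op21: "ptr1 (op21 A) = ptr2 A"
  by (simp add: vec_eq_iff op21_entry ptr1_def ptr2_def)

lemma transpose_on12: "transpose (on12 A) = on12 (transpose A)"
  by (simp add: vec_eq_iff transpose_def on12_def kdelta_commute)

lemma transpose_on23: "transpose (on23 A) = on23 (transpose A)"
  by (simp add: vec_eq_iff transpose_def on23_def kdelta_commute)

lemma transpose_on1: "transpose (on1 Y) = on1 (transpose Y)"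
  by (simp add: vec_eq_iff transpose_def on1_def kdelta_commute)

lemma transpose_on2: "transpose (on2 Y) = on2 (transpose Y)"
  by (simp add: vec_eq_iff transpose_def on2_def kdelta_commute)

lemma transpose_op21: "transpose (op21 A) = op21 (transpose A)"
  by (simp add: vec_eq_iff transpose_def op21_entry)

lemma ptr1_transpose: "ptr1 (transpose A) = transpose (ptr1 A)"
  by (simp add: vec_eq_iff transpose_def ptr1_def)

definition rev3 :: "('n::finite) op3" where
  "rev3 = (\<chi> p q. kdelta q (snd (snd p), fst (snd p), fst p))"

lemma rev3_mult_entry: "(rev3 ** M) $ (a,b,c) $ q = M $ (c,b,a) $ q"
  by (simp add: rev3_def matrix_matrix_mult_def kdelta_simps)

lemma mult_rev3_entry:
  fixes M :: "('n::finite) op3"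
  shows "(M ** rev3) $ p $ (a,b,c) = M $ p $ (c,b,a)"
proof -
  have "rev3 $ q $ (a,b,c) = kdelta q (c,b,a)" for q :: "'n \<times> 'n \<times> 'n"
    by (cases q) (auto simp: rev3_def kdelta_def)
  then show ?thesis
    by (simp add: matrix_matrix_mult_def kdelta_simps)
qed

lemma rev3_rev3: "rev3 ** rev3 = (mat 1 :: ('n::finite) op3)"
  by (simp add: vec_eq_iff rev3_mult_entry) (simp add: rev3_def mat_def kdelta_def)

lemma rev3_conj_on12: "rev3 ** on12 A ** rev3 = on23 (op21 A)"
  by (simp add: vec_eq_iff rev3_mult_entry mult_rev3_entry on12_def on23_def op21_entry mult.commute)

lemma rev3_conj_on23: "rev3 ** on23 A ** rev3 = on12 (op21 A)"
  by (simp add: vec_eq_iff rev3_mult_entry mult_rev3_entry on12_def on23_def op21_entry mult.commute)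

lemma rev3_conj_mult: "rev3 ** (A ** B) ** rev3 = (rev3 ** A ** rev3) ** (rev3 ** B ** rev3)"
proof -
  have "rev3 ** (A ** B) ** rev3 = rev3 ** A ** (rev3 ** rev3) ** B ** rev3"
    by (simp add: rev3_rev3 matrix_mul_assoc)
  then show ?thesis
    by (simp add: matrix_mul_assoc)
qed

subsection \<open>Skew inverses\<close>

lemma is_skew_inverse_iff:
  "is_skew_inverse X P \<longleftrightarrow>
     (\<forall>a c g i. (\<Sum>(j,e)\<in>UNIV. entry X a j g e * entry P e c j i) = kdelta a i * kdelta c g) \<and>
     (\<forall>a c g i. (\<Sum>(j,e)\<in>UNIV. entry P a j g e * entry X e c j i) = kdelta a i * kdelta c g)"
  by (simp add: is_skew_inverse_def vec_eq_iff ptr_mid_on12_on23 flip_def split_paired_All)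

lemma skew_inverse_entries:
  assumes "is_skew_inverse X P"
  shows "(\<Sum>j\<in>UNIV. \<Sum>e\<in>UNIV. entry X a j g e * entry P e c j i) = kdelta a i * kdelta c g"
    and "(\<Sum>j\<in>UNIV. \<Sum>e\<in>UNIV. entry P a j g e * entry X e c j i) = kdelta a i * kdelta c g"
  using assms by (simp_all add: is_skew_inverse_iff sum_UNIV_prod)

lemma skew_inverse_unique:
  assumes "is_skew_inverse X P" "is_skew_inverse X Q"
  shows "P = Q"
proof -
  have PX: "(\<Sum>(j,e)\<in>UNIV. entry P a j g e * entry X e c j i) = kdelta a i * kdelta c g" for a c g i
    using assms(1) by (simp add: is_skew_inverse_iff)
  have XQ: "(\<Sum>(j,e)\<in>UNIV. entry X a j g e * entry Q e c j i) = kdelta a i * kdelta c g" for a c g i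
    using assms(2) by (simp add: is_skew_inverse_iff)
  have "entry P a c g i = entry Q a c g i" for a c g i
  proof -
    have "entry P a c g i = (\<Sum>(j,e)\<in>UNIV. entry P a j g e * (kdelta e i * kdelta c j))"
      by (simp add: sum_UNIV_prod kdelta_simps)
    also have "\<dots> = (\<Sum>(j,e)\<in>UNIV. entry P a j g e * (\<Sum>(j',e')\<in>UNIV. entry X e j' j e' * entry Q e' c j' i))"
      by (simp only: XQ)
    also have "\<dots> = (\<Sum>(j',e')\<in>UNIV. (\<Sum>(j,e)\<in>UNIV. entry P a j g e * entry X e j' j e') * entry Q e' c j' i)"
      unfolding split_def sum_distrib_left sum_distrib_right
      by (subst sum.swap) (simp only: mult_ac)
    also have "\<dots> = entry Q a c g i"
      by (simp only: PX) (simp add: sum_UNIV_prod kdelta_simps)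
    finally show ?thesis .
  qed
  then show ?thesis
    by (simp add: vec_eq_iff)
qed

lemma skew_inv_eqI: "is_skew_inverse X P \<Longrightarrow> skew_inv X = P"
  unfolding skew_inv_def by (blast intro: the_equality skew_inverse_unique)

lemma is_skew_inverse_skew_inv: "skew_invertible X \<Longrightarrow> is_skew_inverse X (skew_inv X)"
  unfolding skew_invertible_def using skew_inv_eqI by metis

lemma is_skew_inverse_transpose:
  assumes "is_skew_inverse X P"
  shows "is_skew_inverse (transpose X) (transpose P)"
  unfolding is_skew_inverse_iff
  by (simp add: transpose_def sum_UNIV_prod, intro conjI allI; subst sum.swap)
    (simp_all only: skew_inverse_entries[OF assms], simp_all add: kdelta_commute mult.commute)

lemma is_skew_inverse_op21:
  assumes "is_skew_inverse X P"
  shows "is_skew_inverse (op21 X) (op21 P)"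
  unfolding is_skew_inverse_iff
  by (simp add: op21_entry sum_UNIV_prod, intro conjI allI; subst sum.swap, subst (1) mult.commute)
    (simp_all only: skew_inverse_entries[OF assms], simp_all add: kdelta_commute mult.commute)

lemma skew_invertible_transpose:
  assumes "skew_invertible X"
  shows "skew_invertible (transpose X)"
    and "skew_inv (transpose X) = transpose (skew_inv X)"
  using is_skew_inverse_transpose[OF is_skew_inverse_skew_inv[OF assms]]
  by (auto simp: skew_invertible_def intro: skew_inv_eqI)

lemma skew_invertible_op21:
  assumes "skew_invertible X"
  shows "skew_invertible (op21 X)"
    and "skew_inv (op21 X) = op21 (skew_inv X)"
  using is_skew_inverse_op21[OF is_skew_inverse_skew_inv[OF assms]]
  by (auto simp: skew_invertible_def intro: skew_inv_eqI)

lemma ptr1_on1_ptr1_mult: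
  assumes "is_skew_inverse X P"
  shows "ptr1 (on1 (ptr1 P) ** X) = mat 1"
proof -
  have PX: "(\<Sum>(j,e)\<in>UNIV. entry P a j g e * entry X e c j i) = kdelta a i * kdelta c g" for a c g i
    using assms by (simp add: is_skew_inverse_iff)
  have "ptr1 (on1 (ptr1 P) ** X) $ r $ s = (\<Sum>(j,e)\<in>UNIV. \<Sum>m\<in>UNIV. entry P m j m e * entry X e r j s)" for r s
    by (simp add: ptr1_def on1_def matrix_matrix_mult_def sum_UNIV_prod kdelta_simps
        sum_distrib_left sum_distrib_right mult.commute)
  also have "\<dots> r s = (\<Sum>m\<in>UNIV. \<Sum>(j,e)\<in>UNIV. entry P m j m e * entry X e r j s)" for r s
    unfolding split_def by (rule sum.swap)
  finally show ?thesis
    by (simp add: vec_eq_iff PX mat_def kdelta_simps) (simp add: kdelta_def)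
qed

subsection \<open>Compatible pairs\<close>

lemma compatible_conj:
  assumes "compatible X F" "invertible F"
  shows "on12 F ** on23 X ** on12 (matrix_inv F) = on23 (matrix_inv F) ** on12 X ** on23 F"
proof -
  let ?G = "matrix_inv F"
  have braid: "on12 X ** on23 F ** on12 F = on23 F ** on12 F ** on23 X"
    using assms(1) unfolding compatible_def by blast
  have inv12: "on12 F ** on12 ?G = mat 1" and inv23: "on23 ?G ** on23 F = mat 1"
    by (simp_all add: on12_mult on23_mult matrix_inv_left matrix_inv_right assms(2))
  have "on23 ?G ** on12 X ** on23 F = on23 ?G ** (on12 X ** on23 F ** on12 F) ** on12 ?G"
    by (metis inv12 matrix_mul_assoc matrix_mul_rid)
  also have "\<dots> = on23 ?G ** (on23 F ** on12 F ** on23 X) ** on12 ?G"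
    by (simp only: braid)
  also have "\<dots> = on12 F ** on23 X ** on12 ?G"
    using inv23 by (simp add: matrix_mul_assoc)
  finally show ?thesis by simp
qed

lemma compatible_transpose:
  fixes X F :: "('n::finite) op2"
  assumes "compatible X F"
  shows "compatible (transpose X) (transpose F)"
proof -
  have "transpose (on12 A ** on23 B ** on12 C) = on12 (transpose C) ** on23 (transpose B) ** on12 (transpose A)"
    and "transpose (on23 A ** on12 B ** on23 C) = on23 (transpose C) ** on12 (transpose B) ** on23 (transpose A)"
    for A B C :: "'n op2"
    by (simp_all add: matrix_transpose_mul transpose_on12 transpose_on23 matrix_mul_assoc)
  then show ?thesis
    using assms unfolding compatible_def by metis
qed

lemma compatible_op21:
  fixes X F :: "('n::finite) op2"
  assumes "compatible X F"
  shows "compatible (op21 X) (op21 F)"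
proof -
  have "on12 (op21 A) ** on23 (op21 B) ** on12 (op21 C) = rev3 ** (on23 A ** on12 B ** on23 C) ** rev3"
    and "on23 (op21 A) ** on12 (op21 B) ** on23 (op21 C) = rev3 ** (on12 A ** on23 B ** on12 C) ** rev3"
    for A B C :: "'n op2"
    by (simp_all only: rev3_conj_mult rev3_conj_on12 rev3_conj_on23)
  then show ?thesis
    using assms unfolding compatible_def by simp
qed

(* Entrywise, this says Tr_(1) C_1 F_12 G_13 = P_23 C_2 for C = Tr_(1) P and G = F^-1. *)
lemma trace_C_F_Finv_entry:
  assumes skew: "is_skew_inverse X P" and inv: "G ** F = mat 1"
    and conj: "on12 F ** on23 X ** on12 G = on23 G ** on12 X ** on23 F"
  shows "(\<Sum>(a,x,y)\<in>UNIV. ptr1 P $ a $ x * entry F x b y f * entry G y c a e)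
       = kdelta b e * ptr1 P $ c $ f"
proof -
  let ?C = "ptr1 P"
  have XP: "(\<Sum>(j,e')\<in>UNIV. entry X r j s e' * entry P e' c j f) = kdelta r f * kdelta c s" for r s c f
    using skew by (simp add: is_skew_inverse_iff)
  have braid: "(\<Sum>(s1,s2,r)\<in>UNIV. entry F x b s1 r * entry X r j s2 e' * entry G s1 s2 a e)
      = (\<Sum>(s1,s2,r)\<in>UNIV. entry G b j r s2 * entry X x r a s1 * entry F s1 s2 e e')" for x b j a e e'
    using arg_cong[OF conj, of "\<lambda>M. M $ (x,b,j) $ (a,e,e')"]
    by (simp only: on12_on23_on12_entry on23_on12_on23_entry)
  have trace: "(\<Sum>(a,x)\<in>UNIV. ?C $ a $ x * entry X x r a s) = kdelta r s" for r s
  proof -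
    have "(\<Sum>(a,x)\<in>UNIV. ?C $ a $ x * entry X x r a s) = ptr1 (on1 ?C ** X) $ r $ s"
      by (simp add: ptr1_def on1_def matrix_matrix_mult_def sum_UNIV_prod kdelta_simps)
    then show ?thesis
      by (simp add: ptr1_on1_ptr1_mult[OF skew] mat_def kdelta_def)
  qed
  have GF: "(\<Sum>s\<in>UNIV. G $ (b,j) $ s * F $ s $ (e,e')) = kdelta b e * kdelta j e'" for b j e e'
    using arg_cong[OF inv, of "\<lambda>M. M $ (b,j) $ (e,e')"]
    by (simp add: matrix_matrix_mult_def mat_one_entry)
  have "(\<Sum>(a,x,y)\<in>UNIV. ?C $ a $ x * entry F x b y f * entry G y c a e)
     = (\<Sum>(a,x)\<in>UNIV. ?C $ a $ x * (\<Sum>(s1,s2,r)\<in>UNIV. entry F x b s1 r * entry G s1 s2 a e * (kdelta r f * kdelta c s2)))"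
    by (simp add: sum_UNIV_prod kdelta_simps sum_distrib_left mult.assoc)
  also have "\<dots> = (\<Sum>(a,x)\<in>UNIV. ?C $ a $ x * (\<Sum>(s1,s2,r)\<in>UNIV. entry F x b s1 r * entry G s1 s2 a e
      * (\<Sum>(j,e')\<in>UNIV. entry X r j s2 e' * entry P e' c j f)))"
    by (simp only: XP)
  also have "\<dots> = (\<Sum>(a,x)\<in>UNIV. ?C $ a $ x * (\<Sum>(j,e')\<in>UNIV.
      (\<Sum>(s1,s2,r)\<in>UNIV. entry F x b s1 r * entry X r j s2 e' * entry G s1 s2 a e) * entry P e' c j f))"
    unfolding split_def sum_distrib_left sum_distrib_right
    by (rule sum.cong[OF refl], subst sum.swap) (simp only: mult_ac)
  also have "\<dots> = (\<Sum>(a,x)\<in>UNIV. ?C $ a $ x * (\<Sum>(j,e')\<in>UNIV.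
      (\<Sum>(s1,s2,r)\<in>UNIV. entry G b j r s2 * entry X x r a s1 * entry F s1 s2 e e') * entry P e' c j f))"
    by (simp only: braid)
  also have "\<dots> = (\<Sum>(j,e')\<in>UNIV. \<Sum>(s1,s2,r)\<in>UNIV.
      entry G b j r s2 * entry F s1 s2 e e' * entry P e' c j f * (\<Sum>(a,x)\<in>UNIV. ?C $ a $ x * entry X x r a s1))"
    unfolding split_def sum_distrib_left sum_distrib_right
    by (subst sum.swap, rule sum.cong[OF refl], subst sum.swap) (simp only: mult_ac)
  also have "\<dots> = (\<Sum>(j,e')\<in>UNIV. (\<Sum>s\<in>UNIV. G $ (b,j) $ s * F $ s $ (e,e')) * entry P e' c j f)"
    by (simp only: trace) (simp add: sum_UNIV_prod kdelta_simps sum_distrib_right mult.assoc)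
  also have "\<dots> = kdelta b e * ?C $ c $ f"
    by (simp add: GF ptr1_def sum_UNIV_prod kdelta_simps)
  finally show ?thesis .
qed

lemma on1_C_op_mult_skew_inv:
  assumes "compatible X F" "skew_invertible X" "skew_invertible F" "invertible F"
  shows "on1 (C_op X) ** skew_inv F = matrix_inv (op21 F) ** on2 (C_op X)"
proof -
  let ?C = "C_op X" and ?P = "skew_inv F" and ?G = "matrix_inv F"
  have contract: "(\<Sum>(a,x,y)\<in>UNIV. ?C $ a $ x * entry F x b y f * entry ?G y c a e) = kdelta b e * ?C $ c $ f"
    for b f c e
    unfolding C_op_def
    by (rule trace_C_F_Finv_entry is_skew_inverse_skew_inv matrix_inv_left compatible_conj assms)+
  have FP: "(\<Sum>(b,f)\<in>UNIV. entry F x b y f * entry ?P f k b l) = kdelta x l * kdelta k y" for x y k l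
    using is_skew_inverse_skew_inv[OF assms(3)] by (simp add: is_skew_inverse_iff)
  have "(on1 ?C ** ?P) $ (c,k) $ (e,l) = (op21 ?G ** on2 ?C) $ (c,k) $ (e,l)" for c k e l
  proof -
    have "(on1 ?C ** ?P) $ (c,k) $ (e,l) = (\<Sum>(b,f)\<in>UNIV. kdelta b e * ?C $ c $ f * entry ?P f k b l)"
      by (simp add: on1_def matrix_matrix_mult_def sum_UNIV_prod kdelta_simps)
    also have "\<dots> = (\<Sum>(b,f)\<in>UNIV. (\<Sum>(a,x,y)\<in>UNIV. ?C $ a $ x * entry F x b y f * entry ?G y c a e) * entry ?P f k b l)"
      by (simp only: contract)
    also have "\<dots> = (\<Sum>(a,x,y)\<in>UNIV. ?C $ a $ x * entry ?G y c a e * (\<Sum>(b,f)\<in>UNIV. entry F x b y f * entry ?P f k b l))"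
      unfolding split_def sum_distrib_left sum_distrib_right
      by (subst sum.swap) (simp only: mult_ac)
    also have "\<dots> = (op21 ?G ** on2 ?C) $ (c,k) $ (e,l)"
      by (simp only: FP) (simp add: on2_def op21_entry matrix_matrix_mult_def sum_UNIV_prod kdelta_simps mult.commute)
    finally show ?thesis .
  qed
  then show ?thesis
    by (simp add: vec_eq_iff invertible_op21 assms(4))
qed

lemma skew_inv_mult_on1_C_op:
  assumes "compatible X F" "skew_invertible X" "skew_invertible F" "invertible F"
  shows "skew_inv F ** on1 (C_op X) = on2 (C_op X) ** matrix_inv (op21 F)"
proof -
  have "on1 (C_op (transpose X)) ** skew_inv (transpose F)
      = matrix_inv (op21 (transpose F)) ** on2 (C_op (transpose X))"
    using assms
    by (intro on1_C_op_mult_skew_inv compatible_transpose skew_invertible_transpose invertible_transpose)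
  then have "transpose (skew_inv F ** on1 (C_op X)) = transpose (on2 (C_op X) ** matrix_inv (op21 F))"
    using assms
    by (simp add: C_op_def ptr1_transpose skew_invertible_transpose invertible_transpose invertible_op21
        flip: transpose_on1 transpose_on2 transpose_op21 matrix_transpose_mul)
  then show ?thesis
    by simp
qed

theorem lemma3p3:
  fixes X F :: "('n::finite) op2"
  assumes "compatible X F"
    and "skew_invertible X" and "skew_invertible F"
    and "invertible F"
  shows "on1 (C_op X) ** skew_inv F = matrix_inv (op21 F) ** on2 (C_op X)
       \<and> skew_inv F ** on1 (C_op X) = on2 (C_op X) ** matrix_inv (op21 F)
       \<and> skew_inv F ** on2 (D_op X) = on1 (D_op X) ** matrix_inv (op21 F)
       \<and> on2 (D_op X) ** skew_inv F = matrix_inv (op21 F) ** on1 (D_op X)"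
proof -
  have flipped: "compatible (op21 X) (op21 F)" "skew_invertible (op21 X)"
    "skew_invertible (op21 F)" "invertible (op21 F)"
    using assms by (simp_all add: compatible_op21 skew_invertible_op21 invertible_op21)
  have C21: "C_op (op21 X) = D_op X"
    by (simp add: C_op_def D_op_def skew_invertible_op21 assms(2) ptr1_op21)
  have "skew_inv F ** on2 (D_op X) = on1 (D_op X) ** matrix_inv (op21 F)"
    using arg_cong[OF skew_inv_mult_on1_C_op[OF flipped], of op21]
    by (simp add: C21 op21_mult op21_on1 op21_on2 skew_invertible_op21 invertible_op21 assms)
  moreover have "on2 (D_op X) ** skew_inv F = matrix_inv (op21 F) ** on1 (D_op X)"
    using arg_cong[OF on1_C_op_mult_skew_inv[OF flipped], of op21]
    by (simp add: C21 op21_mult op21_on1 op21_on2 skew_invertible_op21 invertible_op21 assms)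
  ultimately show ?thesis
    using on1_C_op_mult_skew_inv[OF assms] skew_inv_mult_on1_C_op[OF assms] by blast
qed

end
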